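(* Let $\mathbf C$ be an admissible category of coframes. The coreflection $\mathbb P\dashv\mathrm{pt}$ between $\mathbf{Conv}$ and $(\mathbf C^{\mathrm{conv}})^{op}$ restricts to a coreflection of $\mathbf{PreTop}$ into $(\mathbf C^{\mathrm{pretop}})^{op}$, and to a coreflection of $\mathbf{PreTop}$ into $(\mathbf C^{\mathrm{pretop}}_{\mathrm{cl}})^{op}$.
   Context: A category of coframes has coframes as objects and coframe morphisms (preserving arbitrary infima and finite suprema); it is admissible if every powerset $\mathbb P(X)$ is an object and there are classes of index sets $\mathcal I,\mathcal J$ with morphisms exactly the monotone maps preserving existing $I$-indexed infima ($I\in\mathcal I$) and $J$-indexed suprema ($J\in\mathcal J$). A filter on $L$ is a non-empty upward-closed subset closed under binary meets ($L$ allowed); $\mathbb F L$ is the set of filters. A convergence $\mathbf C$-object is $(L,\lim_L)$ with $\lim_L:\mathbb F L\to L$ monotone; $\mathbf C^{\mathrm{conv}}$-morphisms are $\mathbf C$-morphisms $\varphi:L\to L'$ with $\lim_{L'}\mathcal F\le\varphi(\lim_L\varphi^{-1}(\mathcal F))$. Convergence spaces ($\mathbf{Conv}$): a set $X$ with a relation $\to$ between filters of subsets of $X$ and points with $\{S:x\in S\}\to x$ and upward monotonicity in the filter; continuous maps preserve convergence via image filters $f[\mathcal F]=\{B:f^{-1}(B)\in\mathcal F\}$. $\mathbb P(X)$ has $\lim\mathcal F=\{x:\mathcal F\to x\}$, $\mathbb P(f)=f^{-1}$. $\mathrm{pt}\,L$ is the set of $\mathbf C^{\mathrm{conv}}$-morphisms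 $L\to\{\emptyset,\{*\}\}$ (with constant limit $\{*\}$), $\ell^\bullet=\{\psi:\psi(\ell)=\{*\}\}$, $\mathcal F\to\psi$ iff $\psi\in(\lim_L\{\ell:\ell^\bullet\in\mathcal F\})^\bullet$, $\mathrm{pt}\,\varphi(\psi)=\psi\circ\varphi$. It is known that $\mathbb P\dashv\mathrm{pt}$ is an adjunction whose unit is an isomorphism (a coreflection). A pretopological space is a convergence space $X$ with $\lim_{\mathbb P(X)}\bigcap_{i}\mathcal F_i=\bigcap_i\lim_{\mathbb P(X)}\mathcal F_i$ for every family of filters; $\mathbf{PreTop}$ is the full subcategory of these. A pretopological $\mathbf C$-object is a convergence $\mathbf C$-object with $\lim_L\bigcap_{i\in I}\mathcal F_i=\bigwedge_{i\in I}\lim_L\mathcal F_i$ for every family of filters on $L$; $\mathbf C^{\mathrm{pretop}}$ is the full subcategory of these, and $\mathbf C^{\mathrm{pretop}}_{\mathrm{cl}}$ that of classical ones, where $(L,\lim_L)$ is classical if $\mathcal F\cap\mathcal C_L=\mathcal G\cap\mathcal C_L$ implies $\lim_L\mathcal F=\lim_L\mathcal G$, $\mathcal C_L$ being the set of complemented elements. *)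

theory Defs
  imports Main
begin

definition coframe :: "'a::complete_lattice itself \<Rightarrow> bool" where
  "coframe _ \<longleftrightarrow> (\<forall>(x::'a) A. sup x (Inf A) = (INF a\<in>A. sup x a))"

definition coframe_mor :: "('a::complete_lattice \<Rightarrow> 'b::complete_lattice) \<Rightarrow> bool" where
  "coframe_mor \<phi> \<longleftrightarrow> (\<forall>A. \<phi> (Inf A) = Inf (\<phi> ` A)) \<and> \<phi> bot = bot
     \<and> (\<forall>a b. \<phi> (sup a b) = sup (\<phi> a) (\<phi> b))"

text \<open>C-morphisms of an admissible category given by the index-set classes II and JJ.\<close>
definition C_mor :: "'i set set \<Rightarrow> 'j set set \<Rightarrow> ('a::complete_lattice \<Rightarrow> 'b::complete_lattice) \<Rightarrow> bool" where
  "C_mor II JJ \<phi> \<longleftrightarrow> mono \<phi>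
     \<and> (\<forall>I\<in>II. \<forall>f::'i \<Rightarrow> 'a. \<phi> (INF i\<in>I. f i) = (INF i\<in>I. \<phi> (f i)))
     \<and> (\<forall>J\<in>JJ. \<forall>f::'j \<Rightarrow> 'a. \<phi> (SUP j\<in>J. f j) = (SUP j\<in>J. \<phi> (f j)))"

definition adm_hom :: "'i set set \<Rightarrow> 'j set set \<Rightarrow> 'a::complete_lattice itself \<Rightarrow> 'b::complete_lattice itself \<Rightarrow> bool" where
  "adm_hom II JJ _ _ \<longleftrightarrow> (\<forall>\<phi>::'a \<Rightarrow> 'b. C_mor II JJ \<phi> \<longrightarrow> coframe_mor \<phi>)"

definition lfilter :: "'a::complete_lattice set \<Rightarrow> bool" where
  "lfilter F \<longleftrightarrow> F \<noteq> {} \<and> (\<forall>a b. a \<in> F \<longrightarrow> a \<le> b \<longrightarrow> b \<in> F)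
     \<and> (\<forall>a b. a \<in> F \<longrightarrow> b \<in> F \<longrightarrow> inf a b \<in> F)"

definition conv_obj :: "('a::complete_lattice set \<Rightarrow> 'a) \<Rightarrow> bool" where
  "conv_obj lim \<longleftrightarrow> (\<forall>F G. lfilter F \<longrightarrow> lfilter G \<longrightarrow> F \<subseteq> G \<longrightarrow> lim F \<le> lim G)"

definition conv_mor :: "'i set set \<Rightarrow> 'j set set \<Rightarrow> ('a::complete_lattice set \<Rightarrow> 'a)
    \<Rightarrow> ('b::complete_lattice set \<Rightarrow> 'b) \<Rightarrow> ('a \<Rightarrow> 'b) \<Rightarrow> bool" where
  "conv_mor II JJ limL limL' \<phi> \<longleftrightarrow> C_mor II JJ \<phi>
     \<and> (\<forall>F. lfilter F \<longrightarrow> limL' F \<le> \<phi> (limL (\<phi> -` F)))"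

definition pretop_obj :: "('a::complete_lattice set \<Rightarrow> 'a) \<Rightarrow> bool" where
  "pretop_obj lim \<longleftrightarrow> conv_obj lim \<and>
     (\<forall>\<FF>. (\<forall>F\<in>\<FF>. lfilter F) \<longrightarrow> lim (\<Inter>\<FF>) = (INF F\<in>\<FF>. lim F))"

definition complemented :: "'a::complete_lattice set" where
  "complemented = {a. \<exists>b. inf a b = bot \<and> sup a b = top}"

definition classical_obj :: "('a::complete_lattice set \<Rightarrow> 'a) \<Rightarrow> bool" where
  "classical_obj lim \<longleftrightarrow> conv_obj lim \<and>
     (\<forall>F G. lfilter F \<longrightarrow> lfilter G \<longrightarrow> F \<inter> complemented = G \<inter> complemented \<longrightarrow> lim F = lim G)"

definition sfilter :: "'x set \<Rightarrow> 'x set set \<Rightarrow> bool" where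
  "sfilter X F \<longleftrightarrow> F \<subseteq> Pow X \<and> F \<noteq> {}
     \<and> (\<forall>A B. A \<in> F \<longrightarrow> A \<subseteq> B \<longrightarrow> B \<subseteq> X \<longrightarrow> B \<in> F)
     \<and> (\<forall>A B. A \<in> F \<longrightarrow> B \<in> F \<longrightarrow> A \<inter> B \<in> F)"

definition conv_space :: "'x set \<Rightarrow> ('x set set \<Rightarrow> 'x \<Rightarrow> bool) \<Rightarrow> bool" where
  "conv_space X c \<longleftrightarrow> (\<forall>F x. c F x \<longrightarrow> sfilter X F \<and> x \<in> X)
     \<and> (\<forall>x\<in>X. c {S. S \<subseteq> X \<and> x \<in> S} x)
     \<and> (\<forall>F G x. c F x \<longrightarrow> sfilter X G \<longrightarrow> F \<subseteq> G \<longrightarrow> c G x)"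

definition limset :: "'x set \<Rightarrow> ('x set set \<Rightarrow> 'x \<Rightarrow> bool) \<Rightarrow> 'x set set \<Rightarrow> 'x set" where
  "limset X c F = {x\<in>X. c F x}"

definition pretop_space :: "'x set \<Rightarrow> ('x set set \<Rightarrow> 'x \<Rightarrow> bool) \<Rightarrow> bool" where
  "pretop_space X c \<longleftrightarrow> conv_space X c \<and>
     (\<forall>\<FF>. (\<forall>F\<in>\<FF>. sfilter X F) \<longrightarrow>
        limset X c (Pow X \<inter> \<Inter>\<FF>) = X \<inter> (\<Inter>F\<in>\<FF>. limset X c F))"

definition imfilter :: "'x set \<Rightarrow> 'y set \<Rightarrow> ('x \<Rightarrow> 'y) \<Rightarrow> 'x set set \<Rightarrow> 'y set set" where
  "imfilter X Y f F = {B. B \<subseteq> Y \<and> {x\<in>X. f x \<in> B} \<in> F}"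

definition conv_continuous :: "'x set \<Rightarrow> ('x set set \<Rightarrow> 'x \<Rightarrow> bool) \<Rightarrow> 'y set
    \<Rightarrow> ('y set set \<Rightarrow> 'y \<Rightarrow> bool) \<Rightarrow> ('x \<Rightarrow> 'y) \<Rightarrow> bool" where
  "conv_continuous X c Y d f \<longleftrightarrow> f ` X \<subseteq> Y \<and> (\<forall>F x. c F x \<longrightarrow> d (imfilter X Y f F) (f x))"

definition conv_homeo :: "'x set \<Rightarrow> ('x set set \<Rightarrow> 'x \<Rightarrow> bool) \<Rightarrow> 'y set
    \<Rightarrow> ('y set set \<Rightarrow> 'y \<Rightarrow> bool) \<Rightarrow> ('x \<Rightarrow> 'y) \<Rightarrow> bool" where
  "conv_homeo X c Y d f \<longleftrightarrow> bij_betw f X Y \<and> conv_continuous X c Y d f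
     \<and> conv_continuous Y d X c (inv_into X f)"

text \<open>P(X) for a convergence space on the whole type 'x.\<close>
definition limP :: "('x set set \<Rightarrow> 'x \<Rightarrow> bool) \<Rightarrow> 'x set set \<Rightarrow> 'x set" where
  "limP c F = {x. c F x}"

text \<open>The two-element coframe {{},{*}} is unit set; its constant limit is {*} = UNIV.\<close>
definition pt_pts :: "'i set set \<Rightarrow> 'j set set \<Rightarrow> ('l::complete_lattice set \<Rightarrow> 'l) \<Rightarrow> ('l \<Rightarrow> unit set) set" where
  "pt_pts II JJ limL = {\<psi>. conv_mor II JJ limL (\<lambda>_. UNIV) \<psi>}"

definition bullet :: "'i set set \<Rightarrow> 'j set set \<Rightarrow> ('l::complete_lattice set \<Rightarrow> 'l) \<Rightarrow> 'l \<Rightarrow> ('l \<Rightarrow> unit set) set" where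
  "bullet II JJ limL l = {\<psi>\<in>pt_pts II JJ limL. \<psi> l = UNIV}"

definition pt_conv :: "'i set set \<Rightarrow> 'j set set \<Rightarrow> ('l::complete_lattice set \<Rightarrow> 'l)
    \<Rightarrow> ('l \<Rightarrow> unit set) set set \<Rightarrow> ('l \<Rightarrow> unit set) \<Rightarrow> bool" where
  "pt_conv II JJ limL \<FF> \<psi> \<longleftrightarrow> sfilter (pt_pts II JJ limL) \<FF> \<and>
     \<psi> \<in> bullet II JJ limL (limL {l. bullet II JJ limL l \<in> \<FF>})"

definition unitP :: "'x \<Rightarrow> ('x set \<Rightarrow> unit set)" where
  "unitP x = (\<lambda>A. if x \<in> A then UNIV else {})"

end

(* Admissibility makes every point of a C-object a coframe morphism into the two-element
   coframe. For P(X) such a point psi sends the intersection A0 of all sets it maps to top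
   again to top; A0 is nonempty because psi preserves the empty set, and because psi
   preserves binary unions every x in A0 already has psi {x} = top, so psi = unitP x.
   Hence unitP is a bijection onto pt(P X) with l-bullet = unitP ` l, which makes it a
   homeomorphism. For a general pretopological L, points preserve arbitrary meets, so
   l |-> l-bullet turns the meet of limits into the intersection of limit sets and pt L is
   pretopological. P(X) is classical because every subset is complemented. The universal
   property is transposition: f x l = unitP x (phi l) forces phi l = {x. f x l = top}, and
   continuity of f is exactly the convergence condition on phi. *)

theory Submission
  imports Defs
begin

lemma unit_set_cases: "(u::unit set) = UNIV \<or> u = {}"
  by auto

lemma unit_set_eq_UNIV_iff: "(u::unit set) = UNIV \<longleftrightarrow> () \<in> u"
  by auto

lemma coframe_mor_Inf: "coframe_mor \<phi> \<Longrightarrow> \<phi> (Inf A) = Inf (\<phi> ` A)"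
  unfolding coframe_mor_def by blast

lemma coframe_mor_bot: "coframe_mor \<phi> \<Longrightarrow> \<phi> bot = bot"
  unfolding coframe_mor_def by blast

lemma coframe_mor_sup: "coframe_mor \<phi> \<Longrightarrow> \<phi> (sup a b) = sup (\<phi> a) (\<phi> b)"
  unfolding coframe_mor_def by blast

lemma coframe_mor_inf: "coframe_mor \<phi> \<Longrightarrow> \<phi> (inf a b) = inf (\<phi> a) (\<phi> b)"
  using coframe_mor_Inf[of \<phi> "{a, b}"] by simp

lemma coframe_mor_mono: "coframe_mor \<phi> \<Longrightarrow> mono \<phi>"
  by (rule monoI) (metis coframe_mor_inf inf.absorb_iff1 le_inf_iff)

lemma lfilter_top: "lfilter F \<Longrightarrow> top \<in> F"
  unfolding lfilter_def by auto

lemma lfilter_upward: "lfilter F \<Longrightarrow> a \<in> F \<Longrightarrow> a \<le> b \<Longrightarrow> b \<in> F"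
  unfolding lfilter_def by blast

lemma lfilter_inf: "lfilter F \<Longrightarrow> a \<in> F \<Longrightarrow> b \<in> F \<Longrightarrow> inf a b \<in> F"
  unfolding lfilter_def by blast

lemma lfilter_iff_sfilter_UNIV: "lfilter (F::'x set set) \<longleftrightarrow> sfilter UNIV F"
  unfolding lfilter_def sfilter_def by auto

lemma sfilterI:
  assumes "F \<subseteq> Pow X" "F \<noteq> {}" "\<And>A B. A \<in> F \<Longrightarrow> A \<subseteq> B \<Longrightarrow> B \<subseteq> X \<Longrightarrow> B \<in> F"
    "\<And>A B. A \<in> F \<Longrightarrow> B \<in> F \<Longrightarrow> A \<inter> B \<in> F"
  shows "sfilter X F"
  using assms by (simp add: sfilter_def)

lemma sfilter_upward: "sfilter X F \<Longrightarrow> A \<in> F \<Longrightarrow> A \<subseteq> B \<Longrightarrow> B \<subseteq> X \<Longrightarrow> B \<in> F"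
  unfolding sfilter_def by blast

lemma sfilter_Int: "sfilter X F \<Longrightarrow> A \<in> F \<Longrightarrow> B \<in> F \<Longrightarrow> A \<inter> B \<in> F"
  unfolding sfilter_def by blast

lemma sfilter_carrier: "sfilter X F \<Longrightarrow> X \<in> F"
  unfolding sfilter_def by (metis Pow_iff all_not_in_conv order_refl subsetD)

lemma sfilter_principal: "x \<in> X \<Longrightarrow> sfilter X {S. S \<subseteq> X \<and> x \<in> S}"
  unfolding sfilter_def by auto

lemma sfilter_Pow_Inter:
  assumes "\<And>F. F \<in> \<FF> \<Longrightarrow> sfilter X F"
  shows "sfilter X (Pow X \<inter> \<Inter>\<FF>)"
proof (rule sfilterI)
  show "Pow X \<inter> \<Inter>\<FF> \<noteq> {}"
    using assms sfilter_carrier by blast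
qed (use assms in \<open>auto simp: sfilter_def\<close>)

lemma sfilter_imfilter:
  assumes F: "sfilter X F" and f: "f ` X \<subseteq> Y"
  shows "sfilter Y (imfilter X Y f F)"
proof (rule sfilterI)
  have "{x\<in>X. f x \<in> Y} = X" using f by auto
  then show "imfilter X Y f F \<noteq> {}"
    using sfilter_carrier[OF F] by (auto simp: imfilter_def)
  show "B \<in> imfilter X Y f F" if "A \<in> imfilter X Y f F" "A \<subseteq> B" "B \<subseteq> Y" for A B
  proof -
    have "{x\<in>X. f x \<in> A} \<subseteq> {x\<in>X. f x \<in> B}" using that(2) by auto
    then show ?thesis using that sfilter_upward[OF F] unfolding imfilter_def by blast
  qed
  show "A \<inter> B \<in> imfilter X Y f F" if "A \<in> imfilter X Y f F" "B \<in> imfilter X Y f F" for A B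
  proof -
    have "{x\<in>X. f x \<in> A \<inter> B} = {x\<in>X. f x \<in> A} \<inter> {x\<in>X. f x \<in> B}" by auto
    then show ?thesis using that sfilter_Int[OF F] unfolding imfilter_def by auto
  qed
qed (auto simp: imfilter_def)

lemma conv_spaceD:
  assumes "conv_space X c"
  shows conv_space_sfilter: "c F x \<Longrightarrow> sfilter X F"
    and conv_space_principal: "x \<in> X \<Longrightarrow> c {S. S \<subseteq> X \<and> x \<in> S} x"
    and conv_space_mono: "c F x \<Longrightarrow> sfilter X G \<Longrightarrow> F \<subseteq> G \<Longrightarrow> c G x"
  using assms unfolding conv_space_def by blast+

lemma pt_pts_C_mor: "\<psi> \<in> pt_pts II JJ L \<Longrightarrow> C_mor II JJ \<psi>"
  by (simp add: pt_pts_def conv_mor_def)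

lemma pt_pts_conv: "\<psi> \<in> pt_pts II JJ L \<Longrightarrow> lfilter F \<Longrightarrow> \<psi> (L (\<psi> -` F)) = UNIV"
  by (simp add: pt_pts_def conv_mor_def top.extremum_unique)

lemma pt_pts_coframe_mor:
  assumes "adm_hom II JJ TYPE('l::complete_lattice) TYPE(unit set)"
    and "\<psi> \<in> pt_pts II JJ (L::'l set \<Rightarrow> 'l)"
  shows "coframe_mor \<psi>"
  using assms pt_pts_C_mor unfolding adm_hom_def by blast

lemma bullet_subset: "bullet II JJ L l \<subseteq> pt_pts II JJ L"
  by (auto simp: bullet_def)

lemma bullet_Inf:
  assumes "adm_hom II JJ TYPE('l::complete_lattice) TYPE(unit set)"
  shows "bullet II JJ (L::'l set \<Rightarrow> 'l) (Inf A) = pt_pts II JJ L \<inter> \<Inter>(bullet II JJ L ` A)"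
  using pt_pts_coframe_mor[OF assms] coframe_mor_Inf by (fastforce simp: bullet_def)

lemma bullet_top:
  "adm_hom II JJ TYPE('l::complete_lattice) TYPE(unit set)
    \<Longrightarrow> bullet II JJ (L::'l set \<Rightarrow> 'l) top = pt_pts II JJ L"
  using bullet_Inf[of II JJ L "{}"] by simp

lemma bullet_inf:
  "adm_hom II JJ TYPE('l::complete_lattice) TYPE(unit set)
    \<Longrightarrow> bullet II JJ (L::'l set \<Rightarrow> 'l) (inf a b) = bullet II JJ L a \<inter> bullet II JJ L b"
  using bullet_Inf[of II JJ L "{a, b}"] bullet_subset[of II JJ L a] by auto

lemma bullet_mono:
  "adm_hom II JJ TYPE('l::complete_lattice) TYPE(unit set) \<Longrightarrow> a \<le> b
    \<Longrightarrow> bullet II JJ (L::'l set \<Rightarrow> 'l) a \<subseteq> bullet II JJ L b"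
  by (metis bullet_inf inf.absorb1 inf_le2)

lemma lfilter_bullet_preimage:
  assumes adm: "adm_hom II JJ TYPE('l::complete_lattice) TYPE(unit set)"
    and G: "sfilter (pt_pts II JJ (L::'l set \<Rightarrow> 'l)) G"
  shows "lfilter {l. bullet II JJ L l \<in> G}"
  unfolding lfilter_def
proof (intro conjI allI impI)
  show "{l. bullet II JJ L l \<in> G} \<noteq> {}"
    using bullet_top[OF adm, of L] sfilter_carrier[OF G] by (metis empty_iff mem_Collect_eq)
  show "b \<in> {l. bullet II JJ L l \<in> G}" if "a \<in> {l. bullet II JJ L l \<in> G}" "a \<le> b" for a b
    using that sfilter_upward[OF G _ bullet_mono[OF adm that(2)] bullet_subset] by simp
  show "inf a b \<in> {l. bullet II JJ L l \<in> G}"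
    if "a \<in> {l. bullet II JJ L l \<in> G}" "b \<in> {l. bullet II JJ L l \<in> G}" for a b
    using that sfilter_Int[OF G] bullet_inf[OF adm] by auto
qed

lemma conv_space_pt:
  assumes adm: "adm_hom II JJ TYPE('l::complete_lattice) TYPE(unit set)"
    and L: "conv_obj (L::'l set \<Rightarrow> 'l)"
  shows "conv_space (pt_pts II JJ L) (pt_conv II JJ L)"
  unfolding conv_space_def
proof (intro conjI allI impI ballI)
  fix F \<psi> assume "pt_conv II JJ L F \<psi>"
  then show "sfilter (pt_pts II JJ L) F" and "\<psi> \<in> pt_pts II JJ L"
    by (auto simp: pt_conv_def bullet_def)
next
  fix \<psi> assume \<psi>: "\<psi> \<in> pt_pts II JJ L"
  let ?N = "{S. S \<subseteq> pt_pts II JJ L \<and> \<psi> \<in> S}"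
  have "{l. bullet II JJ L l \<in> ?N} = \<psi> -` {UNIV}"
    using \<psi> bullet_subset by (auto simp: bullet_def)
  moreover have "lfilter {UNIV::unit set}"
    unfolding lfilter_def by auto
  ultimately show "pt_conv II JJ L ?N \<psi>"
    using \<psi> pt_pts_conv[OF \<psi>] sfilter_principal[OF \<psi>] by (simp add: pt_conv_def bullet_def)
next
  fix F G \<psi> assume conv: "pt_conv II JJ L F \<psi>" and G: "sfilter (pt_pts II JJ L) G" and "F \<subseteq> G"
  then have "L {l. bullet II JJ L l \<in> F} \<le> L {l. bullet II JJ L l \<in> G}"
    using L lfilter_bullet_preimage[OF adm] unfolding conv_obj_def pt_conv_def by blast
  with conv G show "pt_conv II JJ L G \<psi>"
    unfolding pt_conv_def using bullet_mono[OF adm] by blast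
qed

lemma pretop_space_pt:
  assumes adm: "adm_hom II JJ TYPE('l::complete_lattice) TYPE(unit set)"
    and L: "pretop_obj (L::'l set \<Rightarrow> 'l)"
  shows "pretop_space (pt_pts II JJ L) (pt_conv II JJ L)"
  unfolding pretop_space_def
proof (intro conjI allI impI)
  show "conv_space (pt_pts II JJ L) (pt_conv II JJ L)"
    using conv_space_pt[OF adm] L by (simp add: pretop_obj_def)
next
  let ?P = "pt_pts II JJ L" and ?\<Phi> = "\<lambda>G. {l. bullet II JJ L l \<in> G}"
  fix \<FF> assume \<FF>: "\<forall>F\<in>\<FF>. sfilter ?P F"
  have "?\<Phi> (Pow ?P \<inter> \<Inter>\<FF>) = \<Inter>(?\<Phi> ` \<FF>)"
    using bullet_subset[of II JJ L] by auto
  moreover have "L (\<Inter>(?\<Phi> ` \<FF>)) = (INF F\<in>\<FF>. L (?\<Phi> F))"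
    using L \<FF> lfilter_bullet_preimage[OF adm] unfolding pretop_obj_def by (simp add: image_image)
  ultimately have "bullet II JJ L (L (?\<Phi> (Pow ?P \<inter> \<Inter>\<FF>)))
      = ?P \<inter> (\<Inter>F\<in>\<FF>. bullet II JJ L (L (?\<Phi> F)))"
    using bullet_Inf[OF adm] by (simp add: image_image)
  then show "limset ?P (pt_conv II JJ L) (Pow ?P \<inter> \<Inter>\<FF>)
      = ?P \<inter> (\<Inter>F\<in>\<FF>. limset ?P (pt_conv II JJ L) F)"
    using \<FF> sfilter_Pow_Inter[of \<FF> ?P] by (auto simp: limset_def pt_conv_def)
qed

lemma conv_obj_limP: "conv_space UNIV c \<Longrightarrow> conv_obj (limP c)"
  unfolding conv_obj_def limP_def lfilter_iff_sfilter_UNIV by (auto dest: conv_space_mono)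

lemma pretop_obj_limP: "pretop_space UNIV c \<Longrightarrow> pretop_obj (limP c)"
  unfolding pretop_obj_def pretop_space_def lfilter_iff_sfilter_UNIV
  by (auto simp: conv_obj_limP limset_def limP_def)

lemma complemented_set: "complemented = (UNIV :: 'x set set)"
  unfolding complemented_def by (auto intro!: exI[of _ "- _"])

lemma classical_obj_limP: "conv_space UNIV c \<Longrightarrow> classical_obj (limP c)"
  by (simp add: classical_obj_def conv_obj_limP complemented_set)

lemma unitP_eq_UNIV_iff: "unitP x A = UNIV \<longleftrightarrow> x \<in> A"
  by (simp add: unitP_def)

lemma inj_unitP: "inj unitP"
  by (rule injI) (metis insertI1 unitP_eq_UNIV_iff singleton_iff)

lemma C_mor_unitP: "C_mor II JJ (unitP x)"
  unfolding C_mor_def by (auto simp: mono_def unitP_def)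

lemma unitP_in_pt_pts:
  assumes c: "conv_space UNIV c"
  shows "unitP x \<in> pt_pts II JJ (limP c)"
proof -
  have "unitP x (limP c (unitP x -` F)) = UNIV" if F: "lfilter F" for F
  proof -
    have "sfilter UNIV (unitP x -` F)"
    proof (rule sfilterI)
      have "UNIV \<in> unitP x -` F"
        using lfilter_top[OF F] by (simp add: unitP_def)
      then show "unitP x -` F \<noteq> {}" by blast
      show "B \<in> unitP x -` F" if "A \<in> unitP x -` F" "A \<subseteq> B" for A B
      proof -
        have "unitP x A \<le> unitP x B"
          using that(2) by (auto simp: unitP_def)
        then show ?thesis
          using that(1) lfilter_upward[OF F] by simp
      qed
      show "A \<inter> B \<in> unitP x -` F" if "A \<in> unitP x -` F" "B \<in> unitP x -` F" for A B
      proof -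
        have "unitP x (A \<inter> B) = inf (unitP x A) (unitP x B)"
          by (auto simp: unitP_def)
        then show ?thesis
          using that lfilter_inf[OF F] by simp
      qed
    qed auto
    moreover have "{S. S \<subseteq> UNIV \<and> x \<in> S} \<subseteq> unitP x -` F"
      using lfilter_top[OF F] by (auto simp: unitP_def)
    ultimately have "c (unitP x -` F) x"
      by (rule conv_space_mono[OF c conv_space_principal[OF c UNIV_I]])
    then show ?thesis
      by (simp add: limP_def unitP_def)
  qed
  then show ?thesis
    using C_mor_unitP by (simp add: pt_pts_def conv_mor_def)
qed

lemma eq_unitP_iff: "\<psi> = unitP x \<longleftrightarrow> (\<forall>A. \<psi> A = UNIV \<longleftrightarrow> x \<in> A)"
proof
  assume "\<forall>A. \<psi> A = UNIV \<longleftrightarrow> x \<in> A"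
  then have "\<psi> A = unitP x A" for A
    using unit_set_cases[of "\<psi> A"] by (auto simp: unitP_def)
  then show "\<psi> = unitP x" ..
qed (simp add: unitP_eq_UNIV_iff)

lemma coframe_mor_unit_set_eq_unitP:
  fixes \<psi> :: "'x set \<Rightarrow> unit set"
  assumes \<psi>: "coframe_mor \<psi>"
  obtains x where "\<psi> = unitP x"
proof -
  define A\<^sub>0 where "A\<^sub>0 = \<Inter>{A. \<psi> A = UNIV}"
  have least: "A\<^sub>0 \<subseteq> A" if "\<psi> A = UNIV" for A
    using that by (auto simp: A\<^sub>0_def)
  have "\<psi> A\<^sub>0 = \<Inter>(\<psi> ` {A. \<psi> A = UNIV})"
    unfolding A\<^sub>0_def using coframe_mor_Inf[OF \<psi>] by simp
  also have "\<dots> = UNIV"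
    by auto
  finally have A\<^sub>0: "\<psi> A\<^sub>0 = UNIV" .
  then have "A\<^sub>0 \<noteq> {}"
    using coframe_mor_bot[OF \<psi>] by auto
  then obtain x where x: "x \<in> A\<^sub>0"
    by blast
  have "\<psi> (A\<^sub>0 - {x}) \<noteq> UNIV"
    using least[of "A\<^sub>0 - {x}"] x by blast
  moreover have "\<psi> A\<^sub>0 = \<psi> {x} \<union> \<psi> (A\<^sub>0 - {x})"
    using coframe_mor_sup[OF \<psi>, of "{x}" "A\<^sub>0 - {x}"] x by (simp add: insert_absorb)
  ultimately have "\<psi> {x} = UNIV"
    using A\<^sub>0 unit_set_cases[of "\<psi> (A\<^sub>0 - {x})"] by simp
  have "\<psi> A = UNIV \<longleftrightarrow> x \<in> A" for A
  proof
    assume "x \<in> A"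
    then have "\<psi> {x} \<le> \<psi> A"
      using coframe_mor_mono[OF \<psi>] by (simp add: mono_def)
    then show "\<psi> A = UNIV"
      using \<open>\<psi> {x} = UNIV\<close> by (simp add: top.extremum_unique)
  qed (use least x in blast)
  then have "\<psi> = unitP x"
    by (simp add: eq_unitP_iff)
  then show ?thesis
    by (rule that)
qed

lemma pt_pts_limP:
  assumes adm: "adm_hom II JJ TYPE('x set) TYPE(unit set)" and c: "conv_space UNIV c"
  shows "pt_pts II JJ (limP (c :: 'x set set \<Rightarrow> 'x \<Rightarrow> bool)) = range unitP"
proof
  show "range unitP \<subseteq> pt_pts II JJ (limP c)"
    using unitP_in_pt_pts[OF c] by blast
  show "pt_pts II JJ (limP c) \<subseteq> range unitP"
  proof
    fix \<psi> assume "\<psi> \<in> pt_pts II JJ (limP c)"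
    then obtain x where "\<psi> = unitP x"
      using coframe_mor_unit_set_eq_unitP pt_pts_coframe_mor[OF adm] by metis
    then show "\<psi> \<in> range unitP" by simp
  qed
qed

lemma bullet_limP:
  assumes "adm_hom II JJ TYPE('x set) TYPE(unit set)" and "conv_space UNIV c"
  shows "bullet II JJ (limP (c :: 'x set set \<Rightarrow> 'x \<Rightarrow> bool)) A = unitP ` A"
proof -
  have "unitP x \<in> bullet II JJ (limP c) A \<longleftrightarrow> x \<in> A" for x
    using pt_pts_limP[OF assms] unitP_eq_UNIV_iff[of x A] by (simp add: bullet_def)
  moreover have "bullet II JJ (limP c) A \<subseteq> range unitP"
    using bullet_subset pt_pts_limP[OF assms] by metis
  ultimately show ?thesis
    by auto
qed

lemma conv_homeo_unitP:
  fixes c :: "'x set set \<Rightarrow> 'x \<Rightarrow> bool"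
  assumes adm: "adm_hom II JJ TYPE('x set) TYPE(unit set)" and c: "conv_space UNIV c"
  shows "conv_homeo UNIV c (pt_pts II JJ (limP c)) (pt_conv II JJ (limP c)) unitP"
proof -
  let ?P = "pt_pts II JJ (limP c)" and ?d = "pt_conv II JJ (limP c)"
  note P = pt_pts_limP[OF adm c] and bullet = bullet_limP[OF adm c]
  have "?d (imfilter UNIV ?P unitP F) (unitP x)" if "c F x" for F x
  proof -
    have "sfilter ?P (imfilter UNIV ?P unitP F)"
      using sfilter_imfilter[OF conv_space_sfilter[OF c that], of unitP ?P] P by simp
    moreover have "{A. unitP ` A \<in> imfilter UNIV ?P unitP F} = F"
      using P by (auto simp: imfilter_def inj_image_mem_iff[OF inj_unitP])
    ultimately show ?thesis
      using that by (simp add: pt_conv_def bullet limP_def)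
  qed
  then have "conv_continuous UNIV c ?P ?d unitP"
    using P by (simp add: conv_continuous_def)
  moreover have "c (imfilter ?P UNIV (inv unitP) G) (inv unitP \<psi>)" if "?d G \<psi>" for G \<psi>
  proof -
    have "\<psi> \<in> unitP ` limP c {A. unitP ` A \<in> G}"
      using that by (simp add: pt_conv_def bullet)
    then obtain x where x: "\<psi> = unitP x" "x \<in> limP c {A. unitP ` A \<in> G}"
      by blast
    have "{p \<in> ?P. inv unitP p \<in> A} = unitP ` A" for A
      using P by (auto simp: inv_f_f[OF inj_unitP])
    then have "imfilter ?P UNIV (inv unitP) G = {A. unitP ` A \<in> G}"
      by (simp add: imfilter_def)
    then show ?thesis
      using x by (simp add: limP_def inv_f_f[OF inj_unitP])
  qed
  then have "conv_continuous ?P ?d UNIV c (inv unitP)"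
    by (simp add: conv_continuous_def)
  moreover have "bij_betw unitP UNIV ?P"
    using P inj_unitP by (simp add: bij_betw_def)
  ultimately show ?thesis
    by (simp add: conv_homeo_def)
qed

lemma comp_unitP_iff: "(\<forall>x. f x = unitP x \<circ> \<phi>) \<longleftrightarrow> \<phi> = (\<lambda>l. {x. f x l = UNIV})"
proof
  assume "\<forall>x. f x = unitP x \<circ> \<phi>"
  then show "\<phi> = (\<lambda>l. {x. f x l = UNIV})"
    by (auto simp: unitP_eq_UNIV_iff)
next
  assume \<phi>: "\<phi> = (\<lambda>l. {x. f x l = UNIV})"
  have "f x l = unitP x (\<phi> l)" for x l
    using unit_set_cases[of "f x l"] by (auto simp: \<phi> unitP_def)
  then show "\<forall>x. f x = unitP x \<circ> \<phi>"
    by (simp add: fun_eq_iff)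
qed

lemma C_mor_transpose:
  fixes II :: "'i set set" and JJ :: "'j set set"
    and f :: "'x \<Rightarrow> 'l::complete_lattice \<Rightarrow> unit set"
  assumes f: "\<And>x. C_mor II JJ (f x)"
  shows "C_mor II JJ (\<lambda>l. {x. f x l = UNIV})"
  unfolding C_mor_def unit_set_eq_UNIV_iff
proof (intro conjI ballI allI)
  show "mono (\<lambda>l. {x. () \<in> f x l})"
  proof (rule monoI)
    fix a b :: 'l
    assume "a \<le> b"
    then have "f x a \<subseteq> f x b" for x
      using f[of x] by (simp add: C_mor_def mono_def)
    then show "{x. () \<in> f x a} \<le> {x. () \<in> f x b}"
      by blast
  qed
  show "{x. () \<in> f x (INF i\<in>I. g i)} = (INF i\<in>I. {x. () \<in> f x (g i)})"
    if "I \<in> II" for I and g :: "'i \<Rightarrow> 'l"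
    using f that by (auto simp: C_mor_def)
  show "{x. () \<in> f x (SUP j\<in>J. g j)} = (SUP j\<in>J. {x. () \<in> f x (g j)})"
    if "J \<in> JJ" for J and g :: "'j \<Rightarrow> 'l"
    using f that by (auto simp: C_mor_def)
qed

lemma conv_mor_transpose:
  assumes f: "conv_continuous UNIV c (pt_pts II JJ L) (pt_conv II JJ L) f"
  shows "conv_mor II JJ L (limP c) (\<lambda>l. {x. f x l = UNIV})"
proof -
  let ?\<phi> = "\<lambda>l. {x. f x l = UNIV}"
  have fP: "f x \<in> pt_pts II JJ L" for x
    using f by (auto simp: conv_continuous_def)
  have "x \<in> ?\<phi> (L (?\<phi> -` F))" if "c F x" for F x
  proof -
    have "{l. bullet II JJ L l \<in> imfilter UNIV (pt_pts II JJ L) f F} = ?\<phi> -` F"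
      using fP bullet_subset[of II JJ L] by (auto simp: imfilter_def bullet_def)
    moreover have "pt_conv II JJ L (imfilter UNIV (pt_pts II JJ L) f F) (f x)"
      using f that by (simp add: conv_continuous_def)
    ultimately show ?thesis
      by (simp add: pt_conv_def bullet_def)
  qed
  then show ?thesis
    using C_mor_transpose[OF pt_pts_C_mor[OF fP]] by (auto simp: conv_mor_def limP_def)
qed

lemma conv_continuous_ex1_conv_mor:
  assumes "conv_continuous UNIV c (pt_pts II JJ L) (pt_conv II JJ L) f"
  shows "\<exists>!\<phi>. conv_mor II JJ L (limP c) \<phi> \<and> (\<forall>x. f x = unitP x \<circ> \<phi>)"
proof (rule ex1I[where a = "\<lambda>l. {x. f x l = UNIV}"])
  show "conv_mor II JJ L (limP c) (\<lambda>l. {x. f x l = UNIV})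
      \<and> (\<forall>x. f x = unitP x \<circ> (\<lambda>l. {x. f x l = UNIV}))"
    using conv_mor_transpose[OF assms] comp_unitP_iff[THEN iffD2, OF refl] by (rule conjI)
  show "\<phi> = (\<lambda>l. {x. f x l = UNIV})"
    if "conv_mor II JJ L (limP c) \<phi> \<and> (\<forall>x. f x = unitP x \<circ> \<phi>)" for \<phi>
    using comp_unitP_iff[THEN iffD1, OF conjunct2[OF that]] .
qed

theorem mainTheorem8:
  fixes II :: "'i set set" and JJ :: "'j set set"
    and c :: "'x set set \<Rightarrow> 'x \<Rightarrow> bool"
    and limL :: "'l::complete_lattice set \<Rightarrow> 'l"
  assumes adm1: "adm_hom II JJ TYPE('l) TYPE('x set)"
    and adm2: "adm_hom II JJ TYPE('l) TYPE(unit set)"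
    and adm3: "adm_hom II JJ TYPE('x set) TYPE(unit set)"
    and cof: "coframe TYPE('l)"
  shows
    "(pretop_space UNIV c \<longrightarrow>
        pretop_obj (limP c) \<and> classical_obj (limP c)
        \<and> conv_homeo UNIV c (pt_pts II JJ (limP c)) (pt_conv II JJ (limP c)) unitP)
     \<and> (pretop_obj limL \<longrightarrow> pretop_space (pt_pts II JJ limL) (pt_conv II JJ limL))
     \<and> (pretop_space UNIV c \<and> pretop_obj limL \<longrightarrow>
          (\<forall>f. conv_continuous UNIV c (pt_pts II JJ limL) (pt_conv II JJ limL) f \<longrightarrow>
             (\<exists>!\<phi>. conv_mor II JJ limL (limP c) \<phi> \<and> (\<forall>x. f x = unitP x \<circ> \<phi>))))"
proof (intro conjI impI allI)
  assume X: "pretop_space UNIV c"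
  then have "conv_space UNIV c"
    by (simp add: pretop_space_def)
  then show "pretop_obj (limP c)" "classical_obj (limP c)"
    and "conv_homeo UNIV c (pt_pts II JJ (limP c)) (pt_conv II JJ (limP c)) unitP"
    using X pretop_obj_limP classical_obj_limP conv_homeo_unitP[OF adm3] by blast+
next
  show "pretop_space (pt_pts II JJ limL) (pt_conv II JJ limL)" if "pretop_obj limL"
    using pretop_space_pt[OF adm2 that] .
next
  show "\<exists>!\<phi>. conv_mor II JJ limL (limP c) \<phi> \<and> (\<forall>x. f x = unitP x \<circ> \<phi>)"
    if "conv_continuous UNIV c (pt_pts II JJ limL) (pt_conv II JJ limL) f" for f
    using conv_continuous_ex1_conv_mor[OF that] .
qed

end
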